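(* For all $x,y\in\mathcal{X}$, $N\in\mathbb{N}^+$ and $\eta>0$, $$\tilde\alpha_N(x,y)-\alpha(x,y)\le\eta+2\sup_{x'\in\mathcal{X}}\mathbb{P}_{Q_{x',N}}\left[|W_{x',N}-1|\ge\frac{\eta}{2(1+\eta)}\right].$$
   Context: Let $(\mathcal{X},\mathcal{B}(\mathcal{X}))$ be a measurable space, $\pi$ a probability distribution on it with density $\pi(x)$ with respect to a reference measure, and $q$ a Markov proposal kernel. For each $x\in\mathcal{X}$, $N\in\mathbb{N}^+$, $Q_{x,N}$ is a probability distribution on $[0,\infty)$ such that $W_{x,N}\sim Q_{x,N}$ satisfies $W_{x,N}>0$ a.s. and $\mathbb{E}[W_{x,N}]=1$. Define $\alpha(x,y)=\min\{1,\frac{\pi(dy)q(y,dx)}{\pi(dx)q(x,dy)}\}$ and $\tilde\alpha_N(x,y)=\mathbb{E}[\min\{1,\frac{\pi(dy)q(y,dx)}{\pi(dx)q(x,dy)}\frac{W_{y,N}}{W_{x,N}}\}]$ with $W_{x,N}\sim Q_{x,N}$ and $W_{y,N}\sim Q_{y,N}$ independent. *)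

theory Defs
  imports "HOL-Probability.Probability"
begin

text \<open>The Metropolis--Hastings ratio pi(dy) q(y,dx) / (pi(dx) q(x,dy)) is passed as an
  arbitrary nonnegative real-valued function r on pairs of states.\<close>

definition mh_alpha :: "('a \<Rightarrow> 'a \<Rightarrow> real) \<Rightarrow> 'a \<Rightarrow> 'a \<Rightarrow> real" where
  "mh_alpha r x y = min 1 (r x y)"

text \<open>Pseudo-marginal acceptance probability: W_x ~ Q x N and W_y ~ Q y N independent.\<close>
definition pm_alpha :: "('a \<Rightarrow> 'a \<Rightarrow> real) \<Rightarrow> ('a \<Rightarrow> nat \<Rightarrow> real measure) \<Rightarrow> nat \<Rightarrow> 'a \<Rightarrow> 'a \<Rightarrow> real" where
  "pm_alpha r Q N x y =
     integral\<^sup>L (Q x N \<Otimes>\<^sub>M Q y N) (\<lambda>(wx, wy). min 1 (r x y * (wy / wx)))"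

end

theory Submission
  imports Defs
begin

text \<open>If both weights lie within \<delta> = \<eta> / (2(1 + \<eta>)) of 1, their ratio is at most
  (1 + \<delta>) / (1 - \<delta>) \<le> 1 + \<eta>, and multiplying the ratio r by a factor t can raise
  min 1 r by at most t - 1. Otherwise one of the two weights lies in the event
  {|W - 1| \<ge> \<delta>}, whose probability pays for the trivial bound 1 on the difference.\<close>

lemma min_one_mult_sub_min_one_le:
  fixes r t :: real
  assumes "r \<ge> 0"
  shows "min 1 (r * t) - min 1 r \<le> max 0 (t - 1)"
proof (cases "t \<ge> 1")
  case True
  have "min 1 (r * t) \<le> t * min 1 r"
  proof (cases "r \<ge> 1")
    case True
    with \<open>t \<ge> 1\<close> have "1 \<le> r * t"
      using mult_mono[of 1 r 1 t] by simp
    then show ?thesis using True \<open>t \<ge> 1\<close> by (simp add: min_def)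
  next
    case False
    then show ?thesis by (simp add: min_def mult.commute)
  qed
  then have "min 1 (r * t) - min 1 r \<le> (t - 1) * min 1 r"
    by (simp add: algebra_simps)
  also have "\<dots> \<le> t - 1"
    using True assms by (simp add: mult_left_le)
  finally show ?thesis by simp
next
  case False
  then have "r * t \<le> r"
    using assms by (simp add: mult_left_le)
  then show ?thesis by (auto simp: min_def)
qed

lemma divide_le_of_near_one:
  fixes a b \<delta> :: real
  assumes "\<delta> < 1" and "\<bar>a - 1\<bar> < \<delta>" and "\<bar>b - 1\<bar> < \<delta>"
  shows "b / a \<le> (1 + \<delta>) / (1 - \<delta>)"
proof -
  have a: "a > 1 - \<delta>" "1 - \<delta> > 0" and b: "b < 1 + \<delta>" "b > 0"
    using assms by auto
  have "b / a \<le> (1 + \<delta>) / a"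
    using a b by (simp add: divide_right_mono)
  also have "\<dots> \<le> (1 + \<delta>) / (1 - \<delta>)"
    using a b by (intro divide_left_mono) auto
  finally show ?thesis .
qed

lemma near_one_ratio_bound:
  fixes \<eta> :: real
  assumes "\<eta> > 0"
  defines "\<delta> \<equiv> \<eta> / (2 * (1 + \<eta>))"
  shows "\<delta> < 1" and "(1 + \<delta>) / (1 - \<delta>) \<le> 1 + \<eta>"
proof -
  show "\<delta> < 1"
    using assms by (simp add: \<delta>_def field_simps)
  have "1 + \<delta> = (2 + 3 * \<eta>) / (2 * (1 + \<eta>))" "1 - \<delta> = (2 + \<eta>) / (2 * (1 + \<eta>))"
    using assms by (simp_all add: \<delta>_def field_simps)
  then have "(1 + \<delta>) / (1 - \<delta>) = (2 + 3 * \<eta>) / (2 + \<eta>)"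
    using assms by simp
  also have "\<dots> \<le> 1 + \<eta>"
    using assms by (simp add: field_simps)
  finally show "(1 + \<delta>) / (1 - \<delta>) \<le> 1 + \<eta>" .
qed

lemma min_one_ratio_sub_le:
  fixes r a b \<eta> :: real
  assumes "r \<ge> 0" and "\<eta> > 0"
  defines "A \<equiv> {w. \<eta> / (2 * (1 + \<eta>)) \<le> \<bar>w - 1\<bar>}"
  shows "min 1 (r * (b / a)) \<le> (min 1 r + \<eta>) + indicator A a + indicator A b"
proof (cases "a \<in> A \<or> b \<in> A")
  case True
  then have "indicator A a + indicator A b \<ge> (1::real)"
    by (auto simp: indicator_def)
  then show ?thesis
    using assms by (simp add: min_def)
next
  case False
  then have "\<bar>a - 1\<bar> < \<eta> / (2 * (1 + \<eta>))" "\<bar>b - 1\<bar> < \<eta> / (2 * (1 + \<eta>))"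
    by (auto simp: A_def)
  then have "b / a \<le> 1 + \<eta>"
    using divide_le_of_near_one near_one_ratio_bound[OF \<open>\<eta> > 0\<close>] by (meson order.trans)
  then have "min 1 (r * (b / a)) - min 1 r \<le> \<eta>"
    using min_one_mult_sub_min_one_le[OF \<open>r \<ge> 0\<close>, of "b / a"] \<open>\<eta> > 0\<close> by linarith
  with False show ?thesis by simp
qed

lemma (in pair_prob_space) integral_le_const_plus_marginal_probs:
  assumes f: "integrable (M1 \<Otimes>\<^sub>M M2) f"
    and A: "A \<in> sets M1" and B: "B \<in> sets M2"
    and f_le: "\<And>a b. a \<in> space M1 \<Longrightarrow> b \<in> space M2 \<Longrightarrow>
                 f (a, b) \<le> c + indicator A a + indicator B b"
  shows "integral\<^sup>L (M1 \<Otimes>\<^sub>M M2) f \<le> c + M1.prob A + M2.prob B"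
proof -
  let ?A = "A \<times> space M2" and ?B = "space M1 \<times> B"
  have sets: "?A \<in> sets (M1 \<Otimes>\<^sub>M M2)" "?B \<in> sets (M1 \<Otimes>\<^sub>M M2)"
    using A B by auto
  have indicators: "integrable (M1 \<Otimes>\<^sub>M M2) (indicator ?A :: _ \<Rightarrow> real)"
    "integrable (M1 \<Otimes>\<^sub>M M2) (indicator ?B :: _ \<Rightarrow> real)"
    using sets by (auto intro!: integrable_real_indicator simp: P.emeasure_finite less_top[symmetric])
  have "P.prob ?A = M1.prob A" "P.prob ?B = M2.prob B"
    using A B by (simp_all add: measure_def M2.emeasure_pair_measure_Times
        M1.emeasure_space_1 M2.emeasure_space_1)
  moreover have "integral\<^sup>L (M1 \<Otimes>\<^sub>M M2) f
      \<le> integral\<^sup>L (M1 \<Otimes>\<^sub>M M2) (\<lambda>z. c + indicator ?A z + indicator ?B z)"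
  proof (rule integral_mono)
    fix z assume "z \<in> space (M1 \<Otimes>\<^sub>M M2)"
    moreover obtain a b where "z = (a, b)"
      by fastforce
    ultimately show "f z \<le> c + indicator ?A z + indicator ?B z"
      using f_le[of a b] by (simp add: space_pair_measure indicator_def)
  qed (use f indicators in auto)
  moreover have "integral\<^sup>L (M1 \<Otimes>\<^sub>M M2) (\<lambda>z. c + indicator ?A z + indicator ?B z)
      = c + P.prob ?A + P.prob ?B"
    using indicators sets[THEN sets.sets_into_space]
    by (simp add: Bochner_Integration.integral_add P.prob_space Int_absorb2)
  ultimately show ?thesis by simp
qed

lemma integrable_min_one_ratio:
  fixes M1 M2 :: "real measure" and c :: real
  assumes "prob_space M1" and "prob_space M2"
    and sets_M1: "sets M1 = sets borel" and sets_M2: "sets M2 = sets borel"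
    and pos_M1: "AE a in M1. a > 0" and pos_M2: "AE b in M2. b > 0"
    and "c \<ge> 0"
  shows "integrable (M1 \<Otimes>\<^sub>M M2) (\<lambda>(a, b). min 1 (c * (b / a)))"
proof -
  interpret M1: prob_space M1 by fact
  interpret M2: prob_space M2 by fact
  interpret pair_prob_space M1 M2 ..
  have sets_P: "sets (M1 \<Otimes>\<^sub>M M2) = sets (borel \<Otimes>\<^sub>M borel)"
    by (rule sets_pair_measure_cong[OF sets_M1 sets_M2])
  have "AE z in M1 \<Otimes>\<^sub>M M2. 0 < fst z \<and> 0 < snd z"
  proof (rule AE_pair_measure)
    have "{z \<in> space (borel \<Otimes>\<^sub>M borel). 0 < fst z \<and> 0 < snd (z :: real \<times> real)}
            \<in> sets (borel \<Otimes>\<^sub>M borel)"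
      by measurable
    then show "{z \<in> space (M1 \<Otimes>\<^sub>M M2). 0 < fst z \<and> 0 < snd z} \<in> sets (M1 \<Otimes>\<^sub>M M2)"
      unfolding sets_P sets_eq_imp_space_eq[OF sets_P] .
    show "AE a in M1. AE b in M2. 0 < fst (a, b) \<and> 0 < snd (a, b)"
      using pos_M1 pos_M2 by (auto elim!: eventually_mono)
  qed
  then have "AE z in M1 \<Otimes>\<^sub>M M2. norm ((\<lambda>(a, b). min 1 (c * (b / a))) z) \<le> 1"
    by eventually_elim (use \<open>c \<ge> 0\<close> in auto)
  moreover have "(\<lambda>(a, b). min 1 (c * (b / a))) \<in> borel_measurable (M1 \<Otimes>\<^sub>M M2)"
    unfolding measurable_cong_sets[OF sets_P refl] by measurable
  ultimately show ?thesis
    by (rule integrable_const_bound)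
qed

theorem lemma3p7:
  fixes r :: "'a \<Rightarrow> 'a \<Rightarrow> real"
    and Q :: "'a \<Rightarrow> nat \<Rightarrow> real measure"
    and x y :: 'a and N :: nat and \<eta> :: real
  assumes r_nonneg: "\<And>u v. r u v \<ge> 0"
    and Q_prob: "\<And>u n. n \<ge> 1 \<Longrightarrow> prob_space (Q u n)"
    and Q_sets: "\<And>u n. n \<ge> 1 \<Longrightarrow> sets (Q u n) = sets borel"
    and Q_pos: "\<And>u n. n \<ge> 1 \<Longrightarrow> (AE w in Q u n. w > 0)"
    and Q_int: "\<And>u n. n \<ge> 1 \<Longrightarrow> integrable (Q u n) (\<lambda>w. w)"
    and Q_mean: "\<And>u n. n \<ge> 1 \<Longrightarrow> integral\<^sup>L (Q u n) (\<lambda>w. w) = 1"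
    and N_pos: "N \<ge> 1"
    and eta_pos: "\<eta> > 0"
  shows "pm_alpha r Q N x y - mh_alpha r x y
           \<le> \<eta> + 2 * (SUP x'. measure (Q x' N) {w. \<bar>w - 1\<bar> \<ge> \<eta> / (2 * (1 + \<eta>))})"
proof -
  define A where "A = {w::real. \<eta> / (2 * (1 + \<eta>)) \<le> \<bar>w - 1\<bar>}"
  interpret X: prob_space "Q x N" using Q_prob N_pos .
  interpret Y: prob_space "Q y N" using Q_prob N_pos .
  interpret XY: pair_prob_space "Q x N" "Q y N" ..
  have sets_X: "sets (Q x N) = sets borel" and sets_Y: "sets (Q y N) = sets borel"
    using Q_sets N_pos by auto
  have "A \<in> sets borel"
    unfolding A_def by measurable
  moreover have "integrable (Q x N \<Otimes>\<^sub>M Q y N) (\<lambda>(a, b). min 1 (r x y * (b / a)))"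
    using Q_prob sets_X sets_Y Q_pos N_pos r_nonneg by (intro integrable_min_one_ratio)
  ultimately have pm_le: "pm_alpha r Q N x y \<le> (mh_alpha r x y + \<eta>) + measure (Q x N) A + measure (Q y N) A"
    unfolding pm_alpha_def mh_alpha_def
    by (intro XY.integral_le_const_plus_marginal_probs)
      (use sets_X sets_Y min_one_ratio_sub_le[OF r_nonneg eta_pos] in \<open>auto simp: A_def\<close>)
  have le_SUP: "measure (Q u N) A \<le> (SUP x'. measure (Q x' N) A)" for u
    using prob_space.prob_le_1[OF Q_prob[OF N_pos]] by (intro cSUP_upper bdd_aboveI) auto
  show ?thesis
    using pm_le le_SUP[of x] le_SUP[of y] unfolding A_def by linarith
qed

end
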